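(* Let $N_x, N_\omega \ge 1$, $\Delta t>0$, $T = N_\omega \Delta t$, $t_j = j\Delta t$ for $j=0,\dots,N_\omega-1$, and for $k = 0,\dots,N_\omega-1$ let $\omega_k = 2\pi\big(k - N_\omega\,\Theta(k - N_\omega/2)\big)/T$, where $\Theta(s)=0$ if $s<0$ and $\Theta(s)=1$ if $s\ge 0$. Let $A\in\mathbb{C}^{N_x\times N_x}$, $q_0\in\mathbb{C}^{N_x}$, and $\hat g_0,\dots,\hat g_{N_\omega-1}\in\mathbb{C}^{N_x}$, and set $$g(t) = \frac{1}{N_\omega}\sum_{l=0}^{N_\omega-1}\hat g_l\, e^{i\omega_l t}.$$ Let $q:[0,T]\to\mathbb{C}^{N_x}$ be the solution of $\dot q = Aq + g(t)$, $q(0)=q_0$, i.e. $q(t) = e^{At}q_0 + \int_0^t e^{A(t-t')}g(t')\,dt'$. Assume that $i\omega_l I - A$ is invertible for every $l\in\{0,\dots,N_\omega-1\}$, and write $R_l = (i\omega_l I - A)^{-1}$. Fix $k\in\{0,\dots,N_\omega-1\}$ and assume that $I - e^{(A - i\omega_k I)\Delta t}$ is invertible. Then $$\hat q_k := \sum_{j=0}^{N_\omega-1} q(t_j)\,e^{-i\omega_k t_j} = R_k\hat g_k + \big(I - e^{(A - i\omega_k I)\Delta t}\big)^{-1}\big(I - e^{AT}\big)\Big(q_0 - \frac{1}{N_\omega}\sum_{l=0}^{N_\omega-1}R_l\hat g_l\Big).$$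
   Context: $I$ denotes the $N_x\times N_x$ identity matrix and $e^{M}$ the matrix exponential. Note that $\omega_k T\in 2\pi\mathbb{Z}$ for all $k$. The quantity $\hat q_k$ is the $k$-th component of the discrete Fourier transform (without normalization) of the samples $q(t_0),\dots,q(t_{N_\omega-1})$; with this convention $\hat g_l$ is the $l$-th DFT component of the samples of $g$. (In the paper this is applied with $g(t) = Bf(t) + n(q(t))$, the sum of an external forcing and a nonlinear term, both assumed to be exactly of this finite Fourier form.) *)

theory Defs
  imports "HOL-Analysis.Analysis"
begin

definition Theta :: "real \<Rightarrow> real" where
  "Theta s = (if s < 0 then 0 else 1)"

definition omega :: "nat \<Rightarrow> real \<Rightarrow> nat \<Rightarrow> real" where
  "omega N T k = 2 * pi * (real k - real N * Theta (real k - real N / 2)) / T"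

definition matpow :: "complex^'n^'n \<Rightarrow> nat \<Rightarrow> complex^'n^'n" where
  "matpow M k = (((**) M) ^^ k) (mat 1)"

definition mexp :: "complex^'n^'n \<Rightarrow> complex^'n^'n" where
  "mexp M = (\<Sum>k. (1 / fact k) *\<^sub>R matpow M k)"

end

theory Submission
  imports Defs
begin

text \<open>Since \<open>(i \<omega>\<^sub>l I - A) R\<^sub>l = I\<close>, the function \<open>t \<mapsto> e^(i \<omega>\<^sub>l t) R\<^sub>l ghat\<^sub>l\<close> is a particular
  solution for the forcing \<open>e^(i \<omega>\<^sub>l t) ghat\<^sub>l\<close>. Hence
  \<open>q(t) = e^(A t) w + (1/N) \<Sigma>\<^sub>l e^(i \<omega>\<^sub>l t) R\<^sub>l ghat\<^sub>l\<close> with \<open>w = q\<^sub>0 - (1/N) \<Sigma>\<^sub>l R\<^sub>l ghat\<^sub>l\<close>.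
  Under the discrete Fourier transform at \<open>\<omega>\<^sub>k\<close> the forced part collapses to \<open>R\<^sub>k ghat\<^sub>k\<close>, because
  \<open>\<omega>\<^sub>l t\<^sub>j \<equiv> 2\<pi> l j / N\<close> modulo \<open>2\<pi>\<close> and the \<open>N\<close>-th roots of unity are orthogonal.
  The free part becomes the geometric sum \<open>\<Sigma>\<^sub>j F\<^sup>j w\<close> with \<open>F = e^((A - i \<omega>\<^sub>k I) \<Delta>t)\<close>, which
  telescopes to \<open>(I - F)\<^sup>-\<^sup>1 (I - F\<^sup>N) w\<close>; finally \<open>F\<^sup>N = e^(A T)\<close> because \<open>e^(i \<omega>\<^sub>k T) = 1\<close>.\<close>

lemma matrix_vector_mult_scaleR_left:
  fixes M :: "'a::real_algebra_1^'n^'m"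
  shows "(r *\<^sub>R M) *v v = r *\<^sub>R (M *v v)"
  by (simp add: vec_eq_iff matrix_vector_mult_def scaleR_sum_right)

lemma matrix_vector_mult_scaleR_right:
  fixes M :: "'a::real_algebra_1^'n^'m"
  shows "M *v (r *\<^sub>R v) = r *\<^sub>R (M *v v)"
  by (simp add: vec_eq_iff matrix_vector_mult_def scaleR_sum_right)

lemma mat_mult_left: "mat a ** X = (\<chi> i j. a * X $ i $ j)"
  unfolding matrix_matrix_mult_def mat_def
  by (simp add: vec_eq_iff if_distrib if_distribR sum.delta cong: if_cong)

lemma mat_mult_right: "X ** mat a = (\<chi> i j. X $ i $ j * a)"
  unfolding matrix_matrix_mult_def mat_def
  by (simp add: vec_eq_iff if_distrib if_distribR sum.delta' cong: if_cong)

lemma mat_mult_mat: "mat a ** mat b = (mat (a * b) :: 'a::comm_semiring_1^'n^'n)"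
  by (simp add: mat_mult_left) (simp add: mat_def vec_eq_iff)

lemma mat_mult_commute: "mat a ** X = X ** (mat a :: 'a::comm_semiring_1^'n^'n)"
  by (simp add: mat_mult_left mat_mult_right mult.commute)

lemma mat_vector_mult: "mat a *v v = a *s v"
  unfolding matrix_vector_mult_def mat_def
  by (simp add: vec_eq_iff if_distrib if_distribR sum.delta cong: if_cong)

lemma vector_scale_scaleR_commute: "c *s (a *\<^sub>R v) = a *\<^sub>R (c *s (v :: complex^'n))"
  by (simp add: vec_eq_iff)

lemma bounded_linear_vector_scale_left: "bounded_linear (\<lambda>z::complex. z *s v)"
  by (simp add: linear_conv_bounded_linear[symmetric] linear_iff vec_eq_iff distrib_right)

lemma bounded_linear_mat: "bounded_linear (mat :: complex \<Rightarrow> complex^'n^'n)"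
  by (simp add: linear_conv_bounded_linear[symmetric] linear_iff vec_eq_iff mat_def)

lemma matrix_inv_right: "invertible M \<Longrightarrow> M ** matrix_inv M = mat 1"
  unfolding invertible_def matrix_inv_def by (rule someI2_ex) auto

lemma matrix_inv_left: "invertible M \<Longrightarrow> matrix_inv M ** M = mat 1"
  unfolding invertible_def matrix_inv_def by (rule someI2_ex) auto

lemma matpow_mat: "matpow (mat z) k = mat (z ^ k)"
  by (induct k) (simp_all add: matpow_def mat_mult_mat)

lemma matpow_geometric_sum:
  "(mat 1 - F) *v (\<Sum>j<n. matpow F j *v w) = w - matpow F n *v (w :: complex^'n::finite)"
proof -
  have "(mat 1 - F) *v (\<Sum>j<n. matpow F j *v w) = (\<Sum>j<n. matpow F j *v w - matpow F (Suc j) *v w)"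
    by (simp add: vec.sum matrix_vector_mult_diff_rdistrib matpow_def flip: matrix_vector_mul_assoc)
  also have "\<dots> = w - matpow F n *v w"
    using sum_lessThan_telescope'[of "\<lambda>j. matpow F j *v w" n] by (simp add: matpow_def)
  finally show ?thesis .
qed

text \<open>HOL-Analysis provides no Banach-algebra structure on complex matrices. The matrix
  exponential is therefore transported to the bounded (real-)linear endomorphisms of \<open>complex^'n\<close>,
  where \<open>exp\<close>, its addition law and its derivative are available.\<close>

typedef (overloaded) 'n endo = "UNIV :: ((complex^'n::finite) \<Rightarrow>\<^sub>L (complex^'n)) set"
  morphisms blinfun_of_endo endo_of_blinfun by simp

setup_lifting type_definition_endo

instantiation endo :: (finite) real_normed_algebra_1
begin

lift_definition norm_endo :: "'a endo \<Rightarrow> real" is norm .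
lift_definition minus_endo :: "'a endo \<Rightarrow> 'a endo \<Rightarrow> 'a endo" is "(-)" .
lift_definition plus_endo :: "'a endo \<Rightarrow> 'a endo \<Rightarrow> 'a endo" is "(+)" .
lift_definition uminus_endo :: "'a endo \<Rightarrow> 'a endo" is uminus .
lift_definition zero_endo :: "'a endo" is 0 .
lift_definition one_endo :: "'a endo" is id_blinfun .
lift_definition times_endo :: "'a endo \<Rightarrow> 'a endo \<Rightarrow> 'a endo" is "(o\<^sub>L)" .
lift_definition scaleR_endo :: "real \<Rightarrow> 'a endo \<Rightarrow> 'a endo" is scaleR .

definition dist_endo :: "'a endo \<Rightarrow> 'a endo \<Rightarrow> real"
  where "dist_endo a b = norm (a - b)"

definition uniformity_endo :: "('a endo \<times> 'a endo) filter"
  where "uniformity_endo = (INF e\<in>{0<..}. principal {(x, y). dist x y < e})"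

definition open_endo :: "'a endo set \<Rightarrow> bool"
  where "open_endo S = (\<forall>x\<in>S. \<forall>\<^sub>F (x', y) in uniformity. x' = x \<longrightarrow> y \<in> S)"

definition sgn_endo :: "'a endo \<Rightarrow> 'a endo"
  where "sgn_endo x = inverse (norm x) *\<^sub>R x"

instance
proof
  fix x y z :: "'a endo" and a b :: real
  show "dist x y = norm (x - y)" by (rule dist_endo_def)
  show "sgn x = inverse (norm x) *\<^sub>R x" by (rule sgn_endo_def)
  show "(uniformity :: ('a endo \<times> 'a endo) filter)
      = (INF e\<in>{0<..}. principal {(x, y). dist x y < e})"
    by (rule uniformity_endo_def)
  show "open U \<longleftrightarrow> (\<forall>x\<in>U. \<forall>\<^sub>F (x', y) in uniformity. x' = x \<longrightarrow> y \<in> U)" for U :: "'a endo set"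
    by (rule open_endo_def)
  show "norm x = 0 \<longleftrightarrow> x = 0" by transfer simp
  show "norm (x + y) \<le> norm x + norm y" by transfer (rule norm_triangle_ineq)
  show "norm (a *\<^sub>R x) = \<bar>a\<bar> * norm x" by transfer simp
  show "norm (x * y) \<le> norm x * norm y" by transfer (rule norm_blinfun_compose)
  show "norm (1 :: 'a endo) = 1" by transfer simp
  show "(0 :: 'a endo) \<noteq> 1" by transfer (metis norm_blinfun_id norm_zero zero_neq_one)
  show "x * y * z = x * (y * z)" by transfer (auto intro!: blinfun_eqI)
  show "1 * x = x" "x * 1 = x" by (transfer, auto intro!: blinfun_eqI)+
  show "(x + y) * z = x * z + y * z" "x * (y + z) = x * y + x * z"
    "a *\<^sub>R x * y = a *\<^sub>R (x * y)" "x * a *\<^sub>R y = a *\<^sub>R (x * y)"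
    by (transfer, auto intro!: blinfun_eqI simp: blinfun.bilinear_simps)+
  show "x + y + z = x + (y + z)" "x + y = y + x" "0 + x = x" "- x + x = 0" "x - y = x + - y"
    by (transfer, simp add: algebra_simps)+
  show "a *\<^sub>R (x + y) = a *\<^sub>R x + a *\<^sub>R y" "(a + b) *\<^sub>R x = a *\<^sub>R x + b *\<^sub>R x"
    "a *\<^sub>R b *\<^sub>R x = (a * b) *\<^sub>R x" "1 *\<^sub>R x = x"
    by (transfer, simp add: scaleR_add_right scaleR_add_left)+
qed

end

instance endo :: (finite) banach
proof
  fix X :: "nat \<Rightarrow> 'a endo"
  assume "Cauchy X"
  have dist_eq: "dist x y = dist (blinfun_of_endo x) (blinfun_of_endo y)" for x y :: "'a endo"
    unfolding dist_endo_def dist_norm by transfer simp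
  have "Cauchy (\<lambda>n. blinfun_of_endo (X n))"
    using \<open>Cauchy X\<close> unfolding Cauchy_def dist_eq .
  then obtain L where "(\<lambda>n. blinfun_of_endo (X n)) \<longlonglongrightarrow> L"
    using Cauchy_convergent_iff convergent_def by blast
  then have "X \<longlonglongrightarrow> endo_of_blinfun L"
    unfolding tendsto_iff dist_eq by (simp add: endo_of_blinfun_inverse)
  then show "convergent X" unfolding convergent_def by blast
qed

lemma bounded_linear_blinfun_of_endo: "bounded_linear blinfun_of_endo"
  by (rule bounded_linear_intro[where K = 1]; transfer; simp)

lemma bounded_linear_endo_apply: "bounded_linear (\<lambda>F. blinfun_of_endo F v)"
  by (rule bounded_linear_compose[OF blinfun.bounded_linear_left bounded_linear_blinfun_of_endo])

lemma bounded_bilinear_endo_apply: "bounded_bilinear (\<lambda>F. blinfun_apply (blinfun_of_endo F))"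
  by (rule bounded_bilinear.comp1[OF bounded_bilinear_blinfun_apply bounded_linear_blinfun_of_endo])

lemma endo_eqI: "(\<And>v. blinfun_of_endo F v = blinfun_of_endo G v) \<Longrightarrow> F = G"
  by (metis blinfun_eqI blinfun_of_endo_inject)

definition endo_of_matrix :: "complex^'n^'n \<Rightarrow> 'n::finite endo"
  where "endo_of_matrix M = endo_of_blinfun (Blinfun ((*v) M))"

lemma endo_of_matrix_apply [simp]: "blinfun_of_endo (endo_of_matrix M) v = M *v v"
  by (simp add: endo_of_matrix_def endo_of_blinfun_inverse bounded_linear_Blinfun_apply)

lemma endo_of_matrix_inject: "endo_of_matrix M = endo_of_matrix N \<Longrightarrow> M = N"
  by (metis endo_of_matrix_apply matrix_eq)

lemma endo_of_matrix_mult: "endo_of_matrix (M ** N) = endo_of_matrix M * endo_of_matrix N"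
  by (rule endo_eqI) (simp add: times_endo.rep_eq matrix_vector_mul_assoc)

lemma endo_of_matrix_one: "endo_of_matrix (mat 1) = 1"
  by (rule endo_eqI) (simp add: one_endo.rep_eq)

lemma endo_of_matrix_zero: "endo_of_matrix 0 = 0"
  by (rule endo_eqI) (simp add: zero_endo.rep_eq)

lemma endo_of_matrix_add: "endo_of_matrix (M + N) = endo_of_matrix M + endo_of_matrix N"
  by (rule endo_eqI)
    (simp add: plus_endo.rep_eq matrix_vector_mult_add_rdistrib blinfun.bilinear_simps)

lemma endo_of_matrix_scaleR: "endo_of_matrix (r *\<^sub>R M) = r *\<^sub>R endo_of_matrix M"
  by (rule endo_eqI)
    (simp add: scaleR_endo.rep_eq scaleR_blinfun.rep_eq matrix_vector_mult_scaleR_left)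

lemma endo_of_matrix_matpow: "endo_of_matrix (matpow M k) = endo_of_matrix M ^ k"
  by (induct k) (simp_all add: matpow_def endo_of_matrix_mult endo_of_matrix_one)

lemma bounded_linear_endo_of_matrix:
  "bounded_linear (endo_of_matrix :: complex^'n^'n \<Rightarrow> 'n::finite endo)"
  by (simp add: linear_conv_bounded_linear[symmetric] linear_iff
      endo_of_matrix_add endo_of_matrix_scaleR)

lemma endo_of_matrix_sum: "endo_of_matrix (\<Sum>i\<in>S. f i) = (\<Sum>i\<in>S. endo_of_matrix (f i))"
  by (rule real_vector.linear_sum[OF bounded_linear.linear[OF bounded_linear_endo_of_matrix]])

text \<open>Only a left inverse of \<open>endo_of_matrix\<close>, since endomorphisms need not be
  complex-linear; it serves to pull convergence back to matrices.\<close>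

definition matrix_of_endo :: "'n::finite endo \<Rightarrow> complex^'n^'n"
  where "matrix_of_endo F = (\<chi> i j. blinfun_of_endo F (axis j 1) $ i)"

lemma matrix_of_endo_of_matrix: "matrix_of_endo (endo_of_matrix M) = M"
  by (simp add: matrix_of_endo_def vec_eq_iff matrix_vector_mult_def axis_def if_distrib
      cong: if_cong)

lemma tendsto_matrix_of_endo:
  "(f \<longlongrightarrow> F) net \<Longrightarrow> ((\<lambda>x. matrix_of_endo (f x)) \<longlongrightarrow> matrix_of_endo F) net"
  unfolding matrix_of_endo_def
  by (intro tendsto_vec_lambda tendsto_vec_nth bounded_linear.tendsto[OF bounded_linear_endo_apply])

lemma mexp_sums: "(\<lambda>k. (1 / fact k) *\<^sub>R matpow M k) sums mexp M"
proof -
  have "endo_of_matrix M ^ k /\<^sub>R fact k = endo_of_matrix ((1 / fact k) *\<^sub>R matpow M k)" for k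
    by (simp add: endo_of_matrix_scaleR endo_of_matrix_matpow inverse_eq_divide)
  with exp_converges[of "endo_of_matrix M"]
  have "(\<lambda>k. endo_of_matrix ((1 / fact k) *\<^sub>R matpow M k)) sums exp (endo_of_matrix M)"
    by simp
  then have "(\<lambda>n. matrix_of_endo (endo_of_matrix (\<Sum>k<n. (1 / fact k) *\<^sub>R matpow M k)))
      \<longlonglongrightarrow> matrix_of_endo (exp (endo_of_matrix M))"
    unfolding sums_def endo_of_matrix_sum by (rule tendsto_matrix_of_endo)
  then have "(\<lambda>k. (1 / fact k) *\<^sub>R matpow M k) sums matrix_of_endo (exp (endo_of_matrix M))"
    unfolding sums_def matrix_of_endo_of_matrix .
  then show ?thesis
    unfolding mexp_def by (simp add: sums_iff)
qed

lemma endo_of_matrix_mexp: "endo_of_matrix (mexp M) = exp (endo_of_matrix M)"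
proof -
  have "(\<lambda>k. endo_of_matrix ((1 / fact k) *\<^sub>R matpow M k)) sums endo_of_matrix (mexp M)"
    by (rule bounded_linear.sums[OF bounded_linear_endo_of_matrix mexp_sums])
  then have "(\<lambda>k. endo_of_matrix M ^ k /\<^sub>R fact k) sums endo_of_matrix (mexp M)"
    by (simp add: endo_of_matrix_scaleR endo_of_matrix_matpow inverse_eq_divide)
  then show ?thesis
    using exp_converges sums_unique2 by blast
qed

lemma mexp_apply: "mexp M *v v = blinfun_of_endo (exp (endo_of_matrix M)) v"
  by (metis endo_of_matrix_apply endo_of_matrix_mexp)

lemma mexp_add_commuting:
  assumes "X ** Y = Y ** X"
  shows "mexp (X + Y) = mexp X ** mexp Y"
proof (rule endo_of_matrix_inject)
  have "endo_of_matrix X * endo_of_matrix Y = endo_of_matrix Y * endo_of_matrix X"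
    by (metis endo_of_matrix_mult assms)
  then show "endo_of_matrix (mexp (X + Y)) = endo_of_matrix (mexp X ** mexp Y)"
    by (simp add: endo_of_matrix_mexp endo_of_matrix_add endo_of_matrix_mult exp_add_commuting)
qed

lemma mexp_zero: "mexp 0 = mat 1"
  by (rule endo_of_matrix_inject)
    (simp add: endo_of_matrix_mexp endo_of_matrix_zero endo_of_matrix_one)

lemma mexp_scaleR_add: "mexp ((s + t) *\<^sub>R X) = mexp (s *\<^sub>R X) ** mexp (t *\<^sub>R X)"
  by (simp add: scaleR_add_left mexp_add_commuting matrix_scalar_ac flip: scalar_matrix_assoc)

lemma mexp_of_nat_scaleR: "mexp (real j *\<^sub>R X) = matpow (mexp X) j"
proof (induct j)
  case 0
  then show ?case by (simp add: mexp_zero matpow_def)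
next
  case (Suc j)
  have "mexp (real (Suc j) *\<^sub>R X) = mexp X ** mexp (real j *\<^sub>R X)"
    using mexp_scaleR_add[of 1 "real j" X] by (simp add: add.commute)
  with Suc show ?case by (simp add: matpow_def)
qed

lemma mexp_mat: "mexp (mat z) = (mat (exp z) :: complex^'n::finite^'n)"
proof -
  have "(\<lambda>k. mat (z ^ k /\<^sub>R fact k)) sums (mat (exp z) :: complex^'n^'n)"
    by (rule bounded_linear.sums[OF bounded_linear_mat exp_converges])
  moreover have "(1 / fact k) *\<^sub>R (matpow (mat z) k :: complex^'n^'n) = mat (z ^ k /\<^sub>R fact k)"
    for k
    unfolding matpow_mat by (simp add: vec_eq_iff mat_def inverse_eq_divide)
  ultimately have "(\<lambda>k. (1 / fact k) *\<^sub>R matpow (mat z) k) sums (mat (exp z) :: complex^'n^'n)"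
    by simp
  with mexp_sums show ?thesis
    by (rule sums_unique2)
qed

lemma mexp_scaleR_diff_mat:
  fixes A :: "complex^'n::finite^'n"
  shows "mexp (r *\<^sub>R (A - mat c)) = mat (exp (- (of_real r * c))) ** mexp (r *\<^sub>R A)"
proof -
  have "r *\<^sub>R mat c = (mat (of_real r * c) :: complex^'n^'n)"
    unfolding mat_def by (simp add: vec_eq_iff of_real_def)
  then have "r *\<^sub>R (A - mat c) = mat (- (of_real r * c)) + r *\<^sub>R A"
    by (simp add: scaleR_diff_right) (simp add: mat_def vec_eq_iff)
  then show ?thesis
    by (simp add: mexp_add_commuting mat_mult_commute mexp_mat)
qed

lemma has_vector_derivative_mexp_exp:
  fixes A :: "complex^'n::finite^'n"
  assumes resolvent: "(mat c - A) *v r = b"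
  shows "((\<lambda>s. mexp ((t - s) *\<^sub>R A) *v (exp (c * of_real s) *s r)) has_vector_derivative
          mexp ((t - s) *\<^sub>R A) *v (exp (c * of_real s) *s b)) (at s within S)"
proof -
  let ?L = "endo_of_matrix A"
  let ?E = "\<lambda>s. exp ((t - s) *\<^sub>R ?L)"
  let ?e = "\<lambda>s. exp (c * of_real s)"
  have mexp_eq: "mexp ((t - s) *\<^sub>R A) *v w = blinfun_of_endo (?E s) w" for s w
    by (simp add: mexp_apply endo_of_matrix_scaleR)
  have "((\<lambda>u. exp (u *\<^sub>R ?L)) \<circ> (\<lambda>s. t - s) has_vector_derivative (- 1) *\<^sub>R (?E s * ?L)) (at s)"
    by (rule vector_diff_chain_at[OF _ exp_scaleR_has_vector_derivative_right])
      (auto intro!: derivative_eq_intros)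
  then have dE: "(?E has_vector_derivative - (?E s * ?L)) (at s within S)"
    by (auto simp: comp_def intro: has_vector_derivative_at_within)
  have "((\<lambda>z. exp (c * z)) has_field_derivative ?e s * c) (at (of_real s))"
    by (auto intro!: derivative_eq_intros)
  then have "(?e has_vector_derivative ?e s * c) (at s within S)"
    by (rule has_vector_derivative_real_field)
  then have de: "((\<lambda>s. ?e s *s r) has_vector_derivative (?e s * c) *s r) (at s within S)"
    by (rule bounded_linear.has_vector_derivative[OF bounded_linear_vector_scale_left])
  have "(?e s * c) *s r - A *v (?e s *s r) = ?e s *s b"
    by (simp add: resolvent[symmetric] matrix_vector_mult_diff_rdistrib mat_vector_mult
        vector_scalar_commute vec_eq_iff algebra_simps)
  then have "blinfun_of_endo (?E s) ((?e s * c) *s r) + blinfun_of_endo (- (?E s * ?L)) (?e s *s r)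
      = blinfun_of_endo (?E s) (?e s *s b)"
    by (auto simp: uminus_endo.rep_eq times_endo.rep_eq blinfun.minus_left
        simp flip: blinfun.diff_right)
  with bounded_bilinear.has_vector_derivative[OF bounded_bilinear_endo_apply dE de] show ?thesis
    unfolding mexp_eq by simp
qed

lemma has_integral_mexp_exp:
  fixes A :: "complex^'n::finite^'n"
  assumes "(mat c - A) *v r = b" and "0 \<le> t"
  shows "((\<lambda>s. mexp ((t - s) *\<^sub>R A) *v (exp (c * of_real s) *s b)) has_integral
           exp (c * of_real t) *s r - mexp (t *\<^sub>R A) *v r) {0..t}"
  using fundamental_theorem_of_calculus[OF \<open>0 \<le> t\<close>
      has_vector_derivative_mexp_exp[OF assms(1), where t = t]]
  by (simp add: mexp_zero)

lemma variation_of_constants_exp_forcing: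
  fixes A :: "complex^'n::finite^'n" and w :: "'i \<Rightarrow> real" and b r :: "'i \<Rightarrow> complex^'n"
  assumes "finite L"
    and resolvent: "\<And>l. l \<in> L \<Longrightarrow> (mat (\<i> * of_real (w l)) - A) *v r l = b l"
    and "0 \<le> t"
  shows "mexp (t *\<^sub>R A) *v q0
           + integral {0..t} (\<lambda>s. mexp ((t - s) *\<^sub>R A) *v
               (a *\<^sub>R (\<Sum>l\<in>L. exp (\<i> * of_real (w l * s)) *s b l)))
         = mexp (t *\<^sub>R A) *v (q0 - a *\<^sub>R (\<Sum>l\<in>L. r l))
           + a *\<^sub>R (\<Sum>l\<in>L. exp (\<i> * of_real (w l * t)) *s r l)"
proof -
  have "((\<lambda>s. \<Sum>l\<in>L. mexp ((t - s) *\<^sub>R A) *v (exp (\<i> * of_real (w l) * of_real s) *s b l))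
      has_integral (\<Sum>l\<in>L. exp (\<i> * of_real (w l) * of_real t) *s r l - mexp (t *\<^sub>R A) *v r l))
      {0..t}"
    using \<open>finite L\<close> by (intro has_integral_sum has_integral_mexp_exp resolvent \<open>0 \<le> t\<close>)
  then have "((\<lambda>s. mexp ((t - s) *\<^sub>R A) *v (a *\<^sub>R (\<Sum>l\<in>L. exp (\<i> * of_real (w l * s)) *s b l)))
      has_integral a *\<^sub>R (\<Sum>l\<in>L. exp (\<i> * of_real (w l * t)) *s r l - mexp (t *\<^sub>R A) *v r l)) {0..t}"
    by (simp add: has_integral_cmul matrix_vector_mult_scaleR_right vec.sum mult.assoc)
  note integral_unique[OF this]
  then show ?thesis
    by (simp add: sum_subtractf vec.sum matrix_vector_mult_scaleR_right
        matrix_vector_mult_diff_distrib scaleR_diff_right)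
qed

lemma sum_exp_root_of_unity:
  fixes d :: int
  assumes "N \<ge> 1"
  shows "(\<Sum>j<N. exp (of_nat j * (2 * pi * \<i> * of_int d / of_nat N)))
         = (if int N dvd d then of_nat N else 0)"
proof -
  define z where "z = exp (2 * pi * \<i> * of_int d / of_nat N)"
  have powers: "exp (of_nat j * (2 * pi * \<i> * of_int d / of_nat N)) = z ^ j" for j
    unfolding z_def by (rule exp_of_nat_mult)
  have "z ^ N = 1"
    using assms unfolding z_def exp_of_nat_mult[symmetric] by (simp add: exp_eq_1)
  moreover have "z = 1 \<longleftrightarrow> int N dvd d"
  proof
    assume "z = 1"
    then obtain n :: int where "2 * pi * d / N = 2 * n * pi"
      unfolding z_def exp_eq_1 by auto
    then have "real_of_int d = real N * n"
      using assms by (simp add: field_simps)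
    then have "d = int N * n"
      by (metis of_int_eq_iff of_int_mult of_int_of_nat_eq)
    then show "int N dvd d" by simp
  next
    assume "int N dvd d"
    then obtain n where "d = int N * n" ..
    then show "z = 1"
      using assms unfolding z_def exp_eq_1 by (auto simp: field_simps)
  qed
  ultimately show ?thesis
    unfolding powers by (auto simp: sum_gp_strict)
qed

definition signed_index :: "nat \<Rightarrow> nat \<Rightarrow> int"
  where "signed_index N l = int l - int N * (if real l < real N / 2 then 0 else 1)"

lemma omega_signed_index: "omega N T l = 2 * pi * of_int (signed_index N l) / T"
  by (simp add: omega_def Theta_def signed_index_def)

lemma signed_index_mod: "signed_index N l mod int N = int l mod int N"
  by (simp add: signed_index_def mod_diff_right_eq [symmetric])

lemma signed_index_dvd_iff:
  assumes "l < N" "k < N"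
  shows "int N dvd (signed_index N l - signed_index N k) \<longleftrightarrow> l = k"
  using assms by (auto simp flip: mod_eq_dvd_iff simp: signed_index_mod)

lemma exp_omega_period: "exp (\<i> * of_real (omega N T l) * of_real T) = 1"
proof (cases "T = 0")
  case False
  then have "\<i> * of_real (omega N T l) * of_real T
      = \<i> * (of_int (signed_index N l) * (of_real pi * 2))"
    by (simp add: omega_signed_index)
  then show ?thesis
    by (simp only: exp_2pi_1_int)
qed (simp add: omega_def)

lemma sum_exp_omega_orthogonal:
  fixes dt :: real
  assumes "l < N" "k < N" "dt \<noteq> 0"
  shows "(\<Sum>j<N. exp (- \<i> * of_real (omega N (real N * dt) k * (real j * dt)))
                 * exp (\<i> * of_real (omega N (real N * dt) l * (real j * dt))))
         = (if l = k then of_nat N else 0)"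
proof -
  let ?d = "signed_index N l - signed_index N k"
  have "N \<ge> 1" using assms by simp
  let ?a = "\<lambda>m j. omega N (real N * dt) m * (real j * dt)"
  have "exp (- \<i> * of_real (?a k j)) * exp (\<i> * of_real (?a l j))
        = exp (of_nat j * (2 * pi * \<i> * of_int ?d / of_nat N))" for j
  proof -
    have "?a l j - ?a k j = real j * (2 * pi * of_int ?d / real N)"
      using \<open>N \<ge> 1\<close> \<open>dt \<noteq> 0\<close> by (simp add: omega_signed_index field_simps)
    then have "- \<i> * of_real (?a k j) + \<i> * of_real (?a l j)
        = \<i> * of_real (real j * (2 * pi * of_int ?d / real N))"
      by (simp add: algebra_simps flip: of_real_diff)
    also have "\<dots> = of_nat j * (2 * pi * \<i> * of_int ?d / of_nat N)"
      by (simp add: mult_ac)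
    finally show ?thesis
      by (simp flip: exp_add)
  qed
  then show ?thesis
    using sum_exp_root_of_unity[OF \<open>N \<ge> 1\<close>, of ?d] signed_index_dvd_iff[OF assms(1,2)] by simp
qed

lemma dft_exp_forcing:
  fixes dt :: real and r :: "nat \<Rightarrow> complex^'n::finite"
  assumes "k < N" "dt \<noteq> 0"
  shows "(\<Sum>j<N. exp (- \<i> * of_real (omega N (real N * dt) k * (real j * dt))) *s
            ((1 / real N) *\<^sub>R
              (\<Sum>l<N. exp (\<i> * of_real (omega N (real N * dt) l * (real j * dt))) *s r l)))
         = r k"
proof -
  let ?c = "\<lambda>m j. exp (- \<i> * of_real (omega N (real N * dt) m * (real j * dt)))"
  let ?e = "\<lambda>m j. exp (\<i> * of_real (omega N (real N * dt) m * (real j * dt)))"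
  have "(\<Sum>j<N. ?c k j *s (\<Sum>l<N. ?e l j *s r l)) = (\<Sum>j<N. \<Sum>l<N. (?c k j * ?e l j) *s r l)"
    by (simp add: vec.scale_sum_right)
  also have "\<dots> = (\<Sum>l<N. \<Sum>j<N. (?c k j * ?e l j) *s r l)"
    by (rule sum.swap)
  also have "\<dots> = (\<Sum>l<N. (\<Sum>j<N. ?c k j * ?e l j) *s r l)"
    by (simp add: vec.scale_sum_left)
  also have "\<dots> = (\<Sum>l<N. (if l = k then of_nat N else 0) *s r l)"
    using sum_exp_omega_orthogonal[OF _ assms] by (intro sum.cong) auto
  also have "\<dots> = of_nat N *s r k"
    using assms by (simp add: if_distrib[of "\<lambda>x. x *s _"] cong: if_cong)
  finally show ?thesis
    using assms by (simp add: vector_scale_scaleR_commute vec_eq_iff flip: scaleR_sum_right)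
      (simp add: scaleR_conv_of_real)
qed

lemma sum_exp_mexp_samples:
  fixes A :: "complex^'n::finite^'n" and c :: complex and dt :: real
  defines "F \<equiv> mexp (dt *\<^sub>R (A - mat c))"
  assumes period: "exp (c * of_real (real N * dt)) = 1"
    and "invertible (mat 1 - F)"
  shows "(\<Sum>j<N. exp (- c * of_real (real j * dt)) *s (mexp ((real j * dt) *\<^sub>R A) *v w))
         = matrix_inv (mat 1 - F) *v ((mat 1 - mexp ((real N * dt) *\<^sub>R A)) *v w)"
proof -
  have matpow_F: "matpow F j = mat (exp (- c * of_real (real j * dt))) ** mexp ((real j * dt) *\<^sub>R A)"
    for j
    unfolding F_def mexp_of_nat_scaleR[symmetric] by (simp add: mexp_scaleR_diff_mat mult_ac)
  have "matpow F N = mexp ((real N * dt) *\<^sub>R A)"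
    using period by (simp add: matpow_F exp_minus mult_ac)
  then have "(mat 1 - F) *v (\<Sum>j<N. matpow F j *v w) = (mat 1 - mexp ((real N * dt) *\<^sub>R A)) *v w"
    by (simp only: matpow_geometric_sum) (simp add: matrix_vector_mult_diff_rdistrib)
  then have "(\<Sum>j<N. matpow F j *v w)
      = matrix_inv (mat 1 - F) *v ((mat 1 - mexp ((real N * dt) *\<^sub>R A)) *v w)"
    by (metis matrix_inv_left[OF \<open>invertible (mat 1 - F)\<close>]
        matrix_vector_mul_assoc matrix_vector_mul_lid)
  then show ?thesis
    by (simp add: matpow_F mat_vector_mult flip: matrix_vector_mul_assoc)
qed

lemma dft_sampled_response:
  fixes A :: "complex^'n::finite^'n" and N :: nat and dt :: real
  defines "\<omega> \<equiv> omega N (real N * dt)"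
  assumes "k < N" "dt \<noteq> 0"
    and "invertible (mat 1 - mexp (dt *\<^sub>R (A - mat (\<i> * of_real (\<omega> k)))))"
  shows "(\<Sum>j<N. exp (- \<i> * of_real (\<omega> k * (real j * dt))) *s
            (mexp ((real j * dt) *\<^sub>R A) *v w
             + (1 / real N) *\<^sub>R (\<Sum>l<N. exp (\<i> * of_real (\<omega> l * (real j * dt))) *s r l)))
         = matrix_inv (mat 1 - mexp (dt *\<^sub>R (A - mat (\<i> * of_real (\<omega> k)))))
             *v ((mat 1 - mexp ((real N * dt) *\<^sub>R A)) *v w) + r k"
proof -
  have "(\<Sum>j<N. exp (- \<i> * of_real (\<omega> k * (real j * dt))) *s (mexp ((real j * dt) *\<^sub>R A) *v w))
      = matrix_inv (mat 1 - mexp (dt *\<^sub>R (A - mat (\<i> * of_real (\<omega> k)))))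
          *v ((mat 1 - mexp ((real N * dt) *\<^sub>R A)) *v w)"
    using sum_exp_mexp_samples[where c = "\<i> * of_real (\<omega> k)", OF _ assms(4)]
      exp_omega_period[of N "real N * dt" k]
    unfolding \<omega>_def by (simp add: mult.assoc)
  with dft_exp_forcing[OF assms(2,3), of r] show ?thesis
    unfolding \<omega>_def by (simp add: vec.scale_right_distrib sum.distrib)
qed

theorem mainTheorem1:
  fixes Nw :: nat and dt T :: real
    and A :: "complex^'n^'n" and q0 :: "complex^'n"
    and ghat :: "nat \<Rightarrow> complex^'n"
    and g q :: "real \<Rightarrow> complex^'n"
    and R :: "nat \<Rightarrow> complex^'n^'n"
    and k :: nat
  assumes hN: "Nw \<ge> 1"
    and hdt: "dt > 0"
    and hT: "T = real Nw * dt"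
    and hg: "\<And>t. g t = (1 / real Nw) *\<^sub>R
                 (\<Sum>l<Nw. exp (\<i> * complex_of_real (omega Nw T l * t)) *s ghat l)"
    and hq: "\<And>t. t \<in> {0..T} \<Longrightarrow>
               q t = mexp (t *\<^sub>R A) *v q0
                     + integral {0..t} (\<lambda>s. mexp ((t - s) *\<^sub>R A) *v g s)"
    and hinv: "\<And>l. l < Nw \<Longrightarrow> invertible (mat (\<i> * complex_of_real (omega Nw T l)) - A)"
    and hR: "\<And>l. l < Nw \<Longrightarrow> R l = matrix_inv (mat (\<i> * complex_of_real (omega Nw T l)) - A)"
    and hk: "k < Nw"
    and hinvk: "invertible (mat 1 - mexp (dt *\<^sub>R (A - mat (\<i> * complex_of_real (omega Nw T k)))))"
  shows "(\<Sum>j<Nw. exp (- \<i> * complex_of_real (omega Nw T k * (real j * dt))) *s q (real j * dt))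
         = R k *v ghat k
           + matrix_inv (mat 1 - mexp (dt *\<^sub>R (A - mat (\<i> * complex_of_real (omega Nw T k)))))
             *v ((mat 1 - mexp (T *\<^sub>R A))
                 *v (q0 - (1 / real Nw) *\<^sub>R (\<Sum>l<Nw. R l *v ghat l)))"
proof -
  define r where "r l = R l *v ghat l" for l
  define w where "w = q0 - (1 / real Nw) *\<^sub>R (\<Sum>l<Nw. r l)"
  have resolvent: "(mat (\<i> * complex_of_real (omega Nw T l)) - A) *v r l = ghat l" if "l < Nw" for l
    using matrix_inv_right[OF hinv[OF that]] hR[OF that]
    by (simp add: r_def matrix_vector_mul_assoc)
  have sample: "q (real j * dt) = mexp ((real j * dt) *\<^sub>R A) *v w
      + (1 / real Nw) *\<^sub>R (\<Sum>l<Nw. exp (\<i> * of_real (omega Nw T l * (real j * dt))) *s r l)"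
    if "j < Nw" for j
  proof -
    have "real j * dt \<in> {0..T}"
      using that hdt hT by (simp add: mult_right_mono)
    then show ?thesis
      unfolding hq[OF \<open>real j * dt \<in> {0..T}\<close>] hg w_def
      using variation_of_constants_exp_forcing
          [where L = "{..<Nw}" and w = "omega Nw T" and b = ghat, OF _ resolvent]
      by simp
  qed
  show ?thesis
    using dft_sampled_response[OF hk _ hinvk[unfolded hT], of w r] hdt
    by (simp add: sample hT r_def w_def add.commute)
qed

end
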